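(* Let $\mathbf{J}\in\mathbb{R}^{n\times p}$, $\mathbf{J}'\in\mathbb{R}^{n\times q}$, $\mathbf{K}=\mathbf{J}\mathbf{J}^{\top}$ positive definite, $\mathbf{S}=\mathbf{J}'\mathbf{J}'^{\top}$, $\sigma>0$, and $\mathbf{Y}\in\mathbb{R}^n\setminus\{0\}$. Define $$\mathcal{R}(\boldsymbol{\theta})=\|\mathbf{Y}-\mathbf{K}(\mathbf{K}+\sigma\mathbf{I})^{-1}\mathbf{Y}\|^2,\qquad \mathcal{R}(\boldsymbol{\theta}\cup\hat{\boldsymbol{\theta}})=\|\mathbf{Y}-(\mathbf{K}+\mathbf{S})(\mathbf{K}+\mathbf{S}+\sigma\mathbf{I})^{-1}\mathbf{Y}\|^2,$$ let $\eta=\|\mathbf{K}^{-1/2}\mathbf{S}\mathbf{K}^{-1/2}\|$ and assume $\eta<1$. If $\kappa(\mathbf{K}+\sigma\mathbf{I})\le c$, then with $a=\frac{c}{(1-\eta)^2}$, $$\frac{\lambda_{\max}(\mathbf{K}+\mathbf{S}+\sigma\mathbf{I})}{a\,\lambda_{\max}(\mathbf{K}+\sigma\mathbf{I})}\le\left(\frac{\mathcal{R}(\boldsymbol{\theta}\cup\hat{\boldsymbol{\theta}})}{\mathcal{R}(\boldsymbol{\theta})}\right)^{1/2}\le\frac{a\,\lambda_{\max}(\mathbf{K}+\mathbf{S}+\sigma\mathbf{I})}{\lambda_{\max}(\mathbf{K}+\sigma\mathbf{I})}.$$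
   Context: $\kappa(\mathbf{A})=\lambda_{\max}(\mathbf{A})/\lambda_{\min}(\mathbf{A})$ is the condition number of a positive definite matrix; norms of matrices are spectral norms. In the application, $\mathbf{K}$ is the neural tangent kernel Gram matrix on training inputs $\mathbf{x}_1,\dots,\mathbf{x}_n$ induced by the trainable parameters $\boldsymbol{\theta}$ ($\mathbf{J}$ = Jacobian of outputs w.r.t. $\boldsymbol{\theta}$), $\mathbf{S}$ is the kernel induced by additional parameters $\hat{\boldsymbol{\theta}}$, $[\mathbf{S}]_{ij}=\nabla_{\hat{\boldsymbol{\theta}}}f(\mathbf{x}_i)\nabla_{\hat{\boldsymbol{\theta}}}f(\mathbf{x}_j)^{\top}$, $\mathbf{Y}$ the training targets, and $\mathcal{R}(\cdot)$ the training squared residual of NTK kernel ridge regression with regularization $\sigma$ for the respective parameter set (the linearized proxy for the empirical risk of fine-tuning those parameters). *)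

theory Defs
  imports "HOL-Analysis.Analysis"
begin

definition symmetric_mat :: "real^'n^'n \<Rightarrow> bool" where
  "symmetric_mat A \<longleftrightarrow> transpose A = A"

definition pos_def :: "real^'n^'n \<Rightarrow> bool" where
  "pos_def A \<longleftrightarrow> symmetric_mat A \<and> (\<forall>x. x \<noteq> 0 \<longrightarrow> x \<bullet> (A *v x) > 0)"

definition pos_semidef :: "real^'n^'n \<Rightarrow> bool" where
  "pos_semidef A \<longleftrightarrow> symmetric_mat A \<and> (\<forall>x. x \<bullet> (A *v x) \<ge> 0)"

definition eigenvalues :: "real^'n^'n \<Rightarrow> real set" where
  "eigenvalues A = {e. \<exists>v. v \<noteq> 0 \<and> A *v v = e *\<^sub>R v}"

definition lambda_max :: "real^'n^'n \<Rightarrow> real" where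
  "lambda_max A = Max (eigenvalues A)"

definition lambda_min :: "real^'n^'n \<Rightarrow> real" where
  "lambda_min A = Min (eigenvalues A)"

definition cond_num :: "real^'n^'n \<Rightarrow> real" where
  "cond_num A = lambda_max A / lambda_min A"

definition spec_norm :: "real^'m^'n \<Rightarrow> real" where
  "spec_norm A = onorm (\<lambda>x. A *v x)"

definition mat_sqrt :: "real^'n^'n \<Rightarrow> real^'n^'n" where
  "mat_sqrt A = (THE B. pos_semidef B \<and> B ** B = A)"

definition krr_residual :: "real^'n^'n \<Rightarrow> real \<Rightarrow> real^'n \<Rightarrow> real" where
  "krr_residual G \<sigma> Y = (norm (Y - (G ** matrix_inv (G + \<sigma> *\<^sub>R mat 1)) *v Y))\<^sup>2"

end

theory Submission
  imports Defs
begin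

(* The residual of kernel ridge regression with Gram matrix G is sigma^2 |(G + sigma I)^-1 Y|^2,
   and |(G + sigma I)^-1 Y| lies between |Y| / lambda_max and |Y| / lambda_min of G + sigma I.
   With A = K + sigma I and B = K + S + sigma I, the square root of the ratio of residuals
   therefore lies between lambda_min(A) / lambda_max(B) and lambda_max(A) / lambda_min(B).
   Since 0 <= S <= eta K in the Loewner order, the extreme eigenvalues of B dominate those of A
   and lambda_max(B) <= (1 + eta) lambda_max(A); the claim then follows from kappa(A) <= c and
   (1 + eta)(1 - eta) <= 1. The extreme eigenvalues and the matrix square root in eta are
   controlled by the spectral theorem, proved by maximising the Rayleigh quotient on invariant
   subspaces. *)

section \<open>Symmetric matrices and the spectral theorem\<close>

lemma symmetric_mat_inner:
  assumes "symmetric_mat A"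
  shows "x \<bullet> (A *v y) = (A *v x) \<bullet> y"
proof -
  have "(A *v x) \<bullet> y = (x v* transpose A) \<bullet> y" by simp
  also have "\<dots> = x \<bullet> (A *v y)"
    using assms unfolding symmetric_mat_def by (simp add: dot_lmul_matrix)
  finally show ?thesis by simp
qed

lemma symmetric_matI:
  fixes A :: "real^'n^'n"
  assumes "\<And>x y. x \<bullet> (A *v y) = (A *v x) \<bullet> y"
  shows "symmetric_mat A"
proof -
  have "A *v y = transpose A *v y" for y
  proof -
    have "x \<bullet> (A *v y - transpose A *v y) = 0" for x
      using assms[of x y] dot_lmul_matrix[of x "transpose A" y] by (simp add: inner_diff_right)
    from this[of "A *v y - transpose A *v y"] show ?thesis by simp
  qed
  then show ?thesis unfolding symmetric_mat_def by (metis matrix_eq)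
qed

lemma linear_coeff_zero_if_quadratic_nonpos:
  fixes p q :: real
  assumes "\<And>t. 2 * t * p + t\<^sup>2 * q \<le> 0"
  shows "p = 0"
proof -
  define s where "s = 1 / (\<bar>q\<bar> + 1)"
  have "s > 0" "s * \<bar>q\<bar> < 1" by (auto simp: s_def field_simps)
  moreover have "s * - \<bar>q\<bar> \<le> s * q" using \<open>s > 0\<close> by (intro mult_left_mono) auto
  ultimately have pos: "s * (2 + s * q) > 0" by simp
  have "p\<^sup>2 * (s * (2 + s * q)) \<le> 0"
    using assms[of "s * p"] by (simp add: algebra_simps power2_eq_square)
  with pos have "p\<^sup>2 \<le> 0" using mult_le_cancel_right_pos[of "s * (2 + s * q)" "p\<^sup>2" 0] by simp
  then show ?thesis by simp
qed

text \<open>First variation: \<open>x \<bullet> A x - (u \<bullet> A u) (x \<bullet> x)\<close> is \<open>\<le> 0\<close> on \<open>V\<close> and vanishes at \<open>u\<close>, so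
  along \<open>x = u + t w\<close> the quadratic polynomial in \<open>t\<close> has vanishing linear coefficient
  \<open>2 (w \<bullet> A u)\<close>.\<close>
lemma rayleigh_maximizer_orthogonal:
  fixes A :: "real^'n^'n"
  assumes A: "symmetric_mat A" and V: "subspace V" and u: "u \<in> V" "u \<bullet> u = 1"
    and max: "\<And>x. x \<in> V \<Longrightarrow> x \<bullet> (A *v x) \<le> (u \<bullet> (A *v u)) * (x \<bullet> x)"
    and w: "w \<in> V" "w \<bullet> u = 0"
  shows "w \<bullet> (A *v u) = 0"
proof (rule linear_coeff_zero_if_quadratic_nonpos)
  fix t :: real
  let ?l = "u \<bullet> (A *v u)"
  have "u \<bullet> (A *v w) = w \<bullet> (A *v u)"
    using symmetric_mat_inner[OF A, of u w] by (simp add: inner_commute)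
  then have quad: "(u + t *\<^sub>R w) \<bullet> (A *v (u + t *\<^sub>R w))
      = ?l + 2 * t * (w \<bullet> (A *v u)) + t\<^sup>2 * (w \<bullet> (A *v w))"
    by (simp add: algebra_simps power2_eq_square)
  have norm: "(u + t *\<^sub>R w) \<bullet> (u + t *\<^sub>R w) = 1 + t\<^sup>2 * (w \<bullet> w)"
    using u w by (simp add: inner_add_left inner_add_right inner_commute power2_eq_square)
  have "u + t *\<^sub>R w \<in> V" using V u w by (simp add: subspace_add subspace_scale)
  from max[OF this] show "2 * t * (w \<bullet> (A *v u)) + t\<^sup>2 * (w \<bullet> (A *v w) - ?l * (w \<bullet> w)) \<le> 0"
    unfolding quad norm by (simp add: algebra_simps)
qed

lemma symmetric_mat_invariant_subspace_eigenvector: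
  fixes A :: "real^'n^'n"
  assumes A: "symmetric_mat A" and V: "subspace V" "V \<noteq> {0}"
    and inv: "\<And>x. x \<in> V \<Longrightarrow> A *v x \<in> V"
  obtains u where "u \<in> V" "norm u = 1" "A *v u = (u \<bullet> (A *v u)) *\<^sub>R u"
proof -
  let ?S = "V \<inter> sphere 0 1"
  obtain v where v: "v \<in> V" "v \<noteq> 0" using V subspace_0 by blast
  have "compact ?S"
    using closed_subspace[OF V(1)] by (metis Int_commute compact_Int_closed compact_sphere)
  moreover have "v /\<^sub>R norm v \<in> ?S" using v V by (simp add: subspace_scale)
  moreover have "continuous_on ?S (\<lambda>x. x \<bullet> (A *v x))"
    by (intro continuous_intros linear_continuous_on matrix_vector_mul_linear)
  ultimately obtain u where u: "u \<in> ?S"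
    and umax: "\<And>y. y \<in> ?S \<Longrightarrow> y \<bullet> (A *v y) \<le> u \<bullet> (A *v u)"
    using continuous_attains_sup[of ?S "\<lambda>x. x \<bullet> (A *v x)"] by blast
  let ?l = "u \<bullet> (A *v u)"
  have uV: "u \<in> V" and uu: "u \<bullet> u = 1" using u by (auto simp: norm_eq_1)
  have max: "x \<bullet> (A *v x) \<le> ?l * (x \<bullet> x)" if "x \<in> V" for x
  proof (cases "x = 0")
    case False
    let ?y = "(1 / norm x) *\<^sub>R x"
    have "?y \<in> ?S" using that False V by (simp add: subspace_scale)
    moreover have "?y \<bullet> (A *v ?y) = (x \<bullet> (A *v x)) / (x \<bullet> x)"
      by (simp add: matrix_vector_mult_scaleR power2_eq_square power2_norm_eq_inner[symmetric])
    ultimately have "(x \<bullet> (A *v x)) / (x \<bullet> x) \<le> ?l" using umax by metis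
    with False show ?thesis by (simp add: divide_le_eq)
  qed simp
  define w where "w = A *v u - ?l *\<^sub>R u"
  have "w \<in> V" using V inv uV unfolding w_def by (simp add: subspace_diff subspace_scale)
  moreover have wu: "w \<bullet> u = 0"
    using uu by (simp add: w_def inner_diff_left inner_commute[of "A *v u"])
  ultimately have "w \<bullet> (A *v u) = 0" using rayleigh_maximizer_orthogonal[OF A V(1) uV uu max] by blast
  with wu have "w \<bullet> w = 0" by (simp add: w_def inner_diff_right)
  then have "A *v u = ?l *\<^sub>R u"
    unfolding inner_eq_zero_iff w_def by (rule eq_iff_diff_eq_0[THEN iffD2])
  moreover have "norm u = 1" using u by simp
  ultimately show ?thesis using that uV by blast
qed

lemma symmetric_mat_orthonormal_eigenbasis_subspace:
  fixes A :: "real^'n^'n"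
  assumes A: "symmetric_mat A"
  shows "subspace V \<Longrightarrow> (\<And>x. x \<in> V \<Longrightarrow> A *v x \<in> V) \<Longrightarrow>
    \<exists>B. B \<subseteq> V \<and> finite B \<and> pairwise orthogonal B \<and> span B = V \<and>
      (\<forall>b\<in>B. norm b = 1 \<and> (\<exists>\<mu>. A *v b = \<mu> *\<^sub>R b))"
proof (induction "dim V" arbitrary: V rule: less_induct)
  case less
  show ?case
  proof (cases "V = {0}")
    case True
    then show ?thesis by (intro exI[of _ "{}"]) auto
  next
    case False
    obtain u where u: "u \<in> V" "norm u = 1" "A *v u = (u \<bullet> (A *v u)) *\<^sub>R u"
      using symmetric_mat_invariant_subspace_eigenvector[OF A less.prems(1) False less.prems(2)] .
    have uu: "u \<bullet> u = 1" using u(2) by (simp add: norm_eq_1)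
    define W where "W = {x \<in> V. x \<bullet> u = 0}"
    have W: "subspace W"
      using less.prems(1) unfolding W_def subspace_def by (auto simp: inner_add_left)
    have AW: "A *v x \<in> W" if "x \<in> W" for x
    proof -
      have "(A *v x) \<bullet> u = x \<bullet> (A *v u)" using symmetric_mat_inner[OF A] by simp
      also have "\<dots> = 0" using that by (subst u(3)) (simp add: W_def)
      finally show ?thesis using that less.prems(2) by (simp add: W_def)
    qed
    have "u \<notin> W" using uu by (simp add: W_def)
    moreover have "W \<subseteq> V" by (auto simp: W_def)
    ultimately have "W \<subset> V" using u(1) by blast
    then have "span W \<subset> span V" using W less.prems(1) by (metis span_eq_iff)
    then have "dim W < dim V" by (rule dim_psubset)
    then obtain C where C: "C \<subseteq> W" "finite C" "pairwise orthogonal C" "span C = W"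
      "\<forall>b\<in>C. norm b = 1 \<and> (\<exists>\<mu>. A *v b = \<mu> *\<^sub>R b)"
      using less.hyps[OF _ W AW] by blast
    have "V \<subseteq> span (insert u C)"
    proof
      fix x assume x: "x \<in> V"
      have "x - (x \<bullet> u) *\<^sub>R u \<in> W" using x u(1) uu less.prems(1)
        by (simp add: W_def subspace_diff subspace_scale inner_diff_left)
      then have "x - (x \<bullet> u) *\<^sub>R u \<in> span (insert u C)"
        using C(4) span_mono[of C "insert u C"] by blast
      moreover have "(x \<bullet> u) *\<^sub>R u \<in> span (insert u C)" by (simp add: span_base span_scale)
      ultimately show "x \<in> span (insert u C)" using span_add by fastforce
    qed
    moreover have "insert u C \<subseteq> V" using C(1) u(1) by (auto simp: W_def)
    moreover have "pairwise orthogonal (insert u C)"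
      using C(1,3) by (auto simp: pairwise_insert orthogonal_def W_def inner_commute)
    moreover have "\<forall>b\<in>insert u C. norm b = 1 \<and> (\<exists>\<mu>. A *v b = \<mu> *\<^sub>R b)"
      using C(5) u(2,3) by blast
    ultimately show ?thesis
      using C(2) span_subspace[OF _ _ less.prems(1)] by (metis finite_insert)
  qed
qed

definition orthonormal_eigenbasis :: "real^'n^'n \<Rightarrow> (real^'n) set \<Rightarrow> bool" where
  "orthonormal_eigenbasis A B \<longleftrightarrow> finite B \<and> pairwise orthogonal B \<and> span B = UNIV \<and>
     (\<forall>b\<in>B. norm b = 1 \<and> (\<exists>\<mu>. A *v b = \<mu> *\<^sub>R b))"

theorem symmetric_mat_orthonormal_eigenbasis:
  assumes "symmetric_mat A"
  obtains B where "orthonormal_eigenbasis A B"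
  using symmetric_mat_orthonormal_eigenbasis_subspace[OF assms, of UNIV]
  unfolding orthonormal_eigenbasis_def by auto

lemma orthonormal_eigenbasis_eigenvector:
  assumes "orthonormal_eigenbasis A B" "b \<in> B"
  shows "A *v b = (b \<bullet> (A *v b)) *\<^sub>R b"
proof -
  obtain \<mu> where \<mu>: "A *v b = \<mu> *\<^sub>R b" and "b \<bullet> b = 1"
    using assms unfolding orthonormal_eigenbasis_def by (auto simp: norm_eq_1)
  then have "b \<bullet> (A *v b) = \<mu>" by simp
  with \<mu> show ?thesis by simp
qed

lemma orthonormal_eigenbasis_inner_sum:
  assumes "orthonormal_eigenbasis A B" "c \<in> B"
  shows "(\<Sum>b\<in>B. f b *\<^sub>R b) \<bullet> c = f c"
proof -
  have B: "finite B" "pairwise orthogonal B" "\<And>b. b \<in> B \<Longrightarrow> b \<bullet> b = 1"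
    using assms(1) unfolding orthonormal_eigenbasis_def by (auto simp: norm_eq_1)
  have "(\<Sum>b\<in>B. f b *\<^sub>R b) \<bullet> c = (\<Sum>b\<in>B. if b = c then f b else 0)"
    unfolding inner_sum_left
    by (rule sum.cong) (use B assms(2) in \<open>auto simp: pairwise_def orthogonal_def\<close>)
  also have "\<dots> = f c" using B(1) assms(2) by simp
  finally show ?thesis .
qed

lemma orthonormal_eigenbasis_expand:
  assumes "orthonormal_eigenbasis A B"
  shows "(\<Sum>b\<in>B. (x \<bullet> b) *\<^sub>R b) = x"
  using assms orthonormal_basis_expand[of B x] unfolding orthonormal_eigenbasis_def by auto

lemma orthonormal_eigenbasis_inner:
  assumes "orthonormal_eigenbasis A B"
  shows "x \<bullet> y = (\<Sum>b\<in>B. (x \<bullet> b) * (y \<bullet> b))"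
proof -
  have "x \<bullet> y = x \<bullet> (\<Sum>b\<in>B. (y \<bullet> b) *\<^sub>R b)" by (simp add: orthonormal_eigenbasis_expand[OF assms])
  then show ?thesis by (simp add: inner_sum_right mult.commute)
qed

lemma orthonormal_eigenbasis_eqI:
  assumes "orthonormal_eigenbasis A B" "\<And>b. b \<in> B \<Longrightarrow> x \<bullet> b = y \<bullet> b"
  shows "x = y"
proof -
  have "(\<Sum>b\<in>B. (x \<bullet> b) *\<^sub>R b) = (\<Sum>b\<in>B. (y \<bullet> b) *\<^sub>R b)" using assms(2) by simp
  then show ?thesis by (simp add: orthonormal_eigenbasis_expand[OF assms(1)])
qed

lemma orthonormal_eigenbasis_coeff:
  assumes "symmetric_mat A" "orthonormal_eigenbasis A B" "b \<in> B"
  shows "(A *v x) \<bullet> b = (b \<bullet> (A *v b)) * (x \<bullet> b)"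
proof -
  have "(A *v x) \<bullet> b = x \<bullet> (A *v b)" using symmetric_mat_inner[OF assms(1)] by simp
  also have "A *v b = (b \<bullet> (A *v b)) *\<^sub>R b"
    using assms(2,3) by (rule orthonormal_eigenbasis_eigenvector)
  finally show ?thesis by (metis inner_scaleR_right)
qed

lemma orthonormal_eigenbasis_quadratic_form:
  assumes "symmetric_mat A" "orthonormal_eigenbasis A B"
  shows "x \<bullet> (A *v x) = (\<Sum>b\<in>B. (b \<bullet> (A *v b)) * (x \<bullet> b)\<^sup>2)"
    and "(A *v x) \<bullet> (A *v x) = (\<Sum>b\<in>B. (b \<bullet> (A *v b))\<^sup>2 * (x \<bullet> b)\<^sup>2)"
    and "x \<bullet> x = (\<Sum>b\<in>B. (x \<bullet> b)\<^sup>2)"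
proof -
  show "x \<bullet> (A *v x) = (\<Sum>b\<in>B. (b \<bullet> (A *v b)) * (x \<bullet> b)\<^sup>2)"
    unfolding orthonormal_eigenbasis_inner[OF assms(2), of x "A *v x"]
    by (rule sum.cong) (simp_all add: orthonormal_eigenbasis_coeff[OF assms] power2_eq_square)
  show "(A *v x) \<bullet> (A *v x) = (\<Sum>b\<in>B. (b \<bullet> (A *v b))\<^sup>2 * (x \<bullet> b)\<^sup>2)"
    unfolding orthonormal_eigenbasis_inner[OF assms(2), of "A *v x" "A *v x"]
    by (rule sum.cong) (simp_all add: orthonormal_eigenbasis_coeff[OF assms] power2_eq_square)
  show "x \<bullet> x = (\<Sum>b\<in>B. (x \<bullet> b)\<^sup>2)"
    unfolding orthonormal_eigenbasis_inner[OF assms(2), of x x] by (simp add: power2_eq_square)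
qed

lemma eigenvalues_orthonormal_eigenbasis:
  assumes A: "symmetric_mat A" and B: "orthonormal_eigenbasis A B"
  shows "eigenvalues A = (\<lambda>b. b \<bullet> (A *v b)) ` B"
proof
  show "(\<lambda>b. b \<bullet> (A *v b)) ` B \<subseteq> eigenvalues A"
  proof
    fix e assume "e \<in> (\<lambda>b. b \<bullet> (A *v b)) ` B"
    then obtain b where b: "b \<in> B" "e = b \<bullet> (A *v b)" by blast
    then have "b \<noteq> 0" using B unfolding orthonormal_eigenbasis_def by auto
    with b orthonormal_eigenbasis_eigenvector[OF B b(1)] show "e \<in> eigenvalues A"
      unfolding eigenvalues_def by blast
  qed
  show "eigenvalues A \<subseteq> (\<lambda>b. b \<bullet> (A *v b)) ` B"
  proof
    fix e assume "e \<in> eigenvalues A"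
    then obtain v where v: "v \<noteq> 0" "A *v v = e *\<^sub>R v" unfolding eigenvalues_def by blast
    obtain b where b: "b \<in> B" "v \<bullet> b \<noteq> 0"
      using orthonormal_eigenbasis_eqI[OF B, of v 0] v(1) by auto
    have "e * (v \<bullet> b) = (b \<bullet> (A *v b)) * (v \<bullet> b)"
      using orthonormal_eigenbasis_coeff[OF A B b(1), of v] v(2) by simp
    with b show "e \<in> (\<lambda>b. b \<bullet> (A *v b)) ` B" by auto
  qed
qed

lemma
  fixes A :: "real^'n^'n"
  assumes "symmetric_mat A"
  shows finite_eigenvalues: "finite (eigenvalues A)"
    and eigenvalues_nonempty: "eigenvalues A \<noteq> {}"
proof -
  obtain B where B: "orthonormal_eigenbasis A B"
    using symmetric_mat_orthonormal_eigenbasis[OF assms] .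
  have "B \<noteq> {}"
  proof
    assume "B = {}"
    moreover have "span B = UNIV" using B unfolding orthonormal_eigenbasis_def by blast
    ultimately have "(axis i 1 :: real^'n) \<in> {0}" for i by simp
    then show False by simp
  qed
  moreover have "finite B" using B unfolding orthonormal_eigenbasis_def by blast
  ultimately show "finite (eigenvalues A)" "eigenvalues A \<noteq> {}"
    unfolding eigenvalues_orthonormal_eigenbasis[OF assms B] by auto
qed

lemma lambda_max_in_eigenvalues: "symmetric_mat A \<Longrightarrow> lambda_max A \<in> eigenvalues A"
  unfolding lambda_max_def using finite_eigenvalues eigenvalues_nonempty by (rule Max_in)

lemma lambda_min_in_eigenvalues: "symmetric_mat A \<Longrightarrow> lambda_min A \<in> eigenvalues A"
  unfolding lambda_min_def using finite_eigenvalues eigenvalues_nonempty by (rule Min_in)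

lemma eigenvalue_le_lambda_max: "symmetric_mat A \<Longrightarrow> e \<in> eigenvalues A \<Longrightarrow> e \<le> lambda_max A"
  unfolding lambda_max_def using finite_eigenvalues by (rule Max_ge)

lemma lambda_min_le_eigenvalue: "symmetric_mat A \<Longrightarrow> e \<in> eigenvalues A \<Longrightarrow> lambda_min A \<le> e"
  unfolding lambda_min_def using finite_eigenvalues by (rule Min_le)

lemma eigenvalueE:
  assumes "e \<in> eigenvalues A"
  obtains v where "v \<bullet> v = 1" "v \<bullet> (A *v v) = e"
proof -
  obtain v where v: "v \<noteq> 0" "A *v v = e *\<^sub>R v" using assms unfolding eigenvalues_def by blast
  have uu: "sgn v \<bullet> sgn v = 1" using v(1) by (simp add: norm_eq_1[symmetric] norm_sgn)
  have "A *v sgn v = e *\<^sub>R sgn v"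
    using v(2) by (simp add: sgn_div_norm matrix_vector_mult_scaleR mult.commute)
  with uu have "sgn v \<bullet> (A *v sgn v) = e" by simp
  with uu show ?thesis by (rule that)
qed

lemma rayleigh_quotient_bounds:
  assumes A: "symmetric_mat A"
  shows "lambda_min A * (x \<bullet> x) \<le> x \<bullet> (A *v x)" and "x \<bullet> (A *v x) \<le> lambda_max A * (x \<bullet> x)"
proof -
  obtain B where B: "orthonormal_eigenbasis A B"
    using symmetric_mat_orthonormal_eigenbasis[OF A] .
  have eig: "b \<bullet> (A *v b) \<in> eigenvalues A" if "b \<in> B" for b
    using eigenvalues_orthonormal_eigenbasis[OF A B] that by blast
  show "lambda_min A * (x \<bullet> x) \<le> x \<bullet> (A *v x)"
    unfolding orthonormal_eigenbasis_quadratic_form(1,3)[OF A B, of x] sum_distrib_left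
    by (intro sum_mono mult_right_mono lambda_min_le_eigenvalue[OF A eig]) auto
  show "x \<bullet> (A *v x) \<le> lambda_max A * (x \<bullet> x)"
    unfolding orthonormal_eigenbasis_quadratic_form(1,3)[OF A B, of x] sum_distrib_left
    by (intro sum_mono mult_right_mono eigenvalue_le_lambda_max[OF A eig]) auto
qed

lemma lambda_max_leI:
  assumes "symmetric_mat A" "\<And>x. x \<bullet> (A *v x) \<le> C * (x \<bullet> x)"
  shows "lambda_max A \<le> C"
proof -
  obtain v where "v \<bullet> v = 1" "v \<bullet> (A *v v) = lambda_max A"
    using eigenvalueE[OF lambda_max_in_eigenvalues[OF assms(1)]] .
  with assms(2)[of v] show ?thesis by simp
qed

lemma lambda_min_geI:
  assumes "symmetric_mat A" "\<And>x. C * (x \<bullet> x) \<le> x \<bullet> (A *v x)"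
  shows "C \<le> lambda_min A"
proof -
  obtain v where "v \<bullet> v = 1" "v \<bullet> (A *v v) = lambda_min A"
    using eigenvalueE[OF lambda_min_in_eigenvalues[OF assms(1)]] .
  with assms(2)[of v] show ?thesis by simp
qed

lemma lambda_min_pos:
  assumes "pos_def A"
  shows "0 < lambda_min A"
proof -
  obtain v where v: "v \<bullet> v = 1" "v \<bullet> (A *v v) = lambda_min A"
    using eigenvalueE[OF lambda_min_in_eigenvalues] assms unfolding pos_def_def by blast
  then have "v \<noteq> 0" by auto
  with assms v(2) show ?thesis unfolding pos_def_def by auto
qed

lemma lambda_min_le_lambda_max: "symmetric_mat A \<Longrightarrow> lambda_min A \<le> lambda_max A"
  by (rule lambda_min_le_eigenvalue[OF _ lambda_max_in_eigenvalues])

lemma lambda_min_mult_norm_le: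
  assumes "symmetric_mat A"
  shows "lambda_min A * norm x \<le> norm (A *v x)"
proof (cases "x = 0")
  case False
  have "lambda_min A * (norm x)\<^sup>2 \<le> x \<bullet> (A *v x)"
    using rayleigh_quotient_bounds(1)[OF assms] by (simp add: power2_norm_eq_inner)
  also have "\<dots> \<le> norm x * norm (A *v x)" by (rule norm_cauchy_schwarz)
  finally have "(lambda_min A * norm x) * norm x \<le> norm (A *v x) * norm x"
    by (simp add: power2_eq_square ac_simps)
  with False show ?thesis by simp
qed simp

lemma norm_mult_le_lambda_max:
  assumes P: "pos_semidef A"
  shows "norm (A *v x) \<le> lambda_max A * norm x"
proof -
  have A: "symmetric_mat A" using P unfolding pos_semidef_def by simp
  obtain B where B: "orthonormal_eigenbasis A B"
    using symmetric_mat_orthonormal_eigenbasis[OF A] .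
  have nonneg: "0 \<le> b \<bullet> (A *v b)" for b using P unfolding pos_semidef_def by simp
  have le: "b \<bullet> (A *v b) \<le> lambda_max A" if "b \<in> B" for b
    using eigenvalue_le_lambda_max[OF A] eigenvalues_orthonormal_eigenbasis[OF A B] that by blast
  have "(A *v x) \<bullet> (A *v x) \<le> (lambda_max A)\<^sup>2 * (x \<bullet> x)"
    unfolding orthonormal_eigenbasis_quadratic_form(2,3)[OF A B, of x] sum_distrib_left
    by (intro sum_mono mult_right_mono power_mono le nonneg zero_le_power2)
  also have "\<dots> = (lambda_max A * norm x)\<^sup>2"
    by (simp add: power_mult_distrib power2_norm_eq_inner)
  finally have "(norm (A *v x))\<^sup>2 \<le> (lambda_max A * norm x)\<^sup>2"
    by (simp add: power2_norm_eq_inner)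
  moreover obtain v where "v \<bullet> v = 1" "v \<bullet> (A *v v) = lambda_max A"
    using eigenvalueE[OF lambda_max_in_eigenvalues[OF A]] .
  then have "0 \<le> lambda_max A" using nonneg[of v] by simp
  ultimately show ?thesis by (meson power2_le_imp_le mult_nonneg_nonneg norm_ge_zero)
qed

lemma pos_def_imp_pos_semidef: "pos_def A \<Longrightarrow> pos_semidef A"
  unfolding pos_def_def pos_semidef_def by (metis inner_zero_left order_le_less)

lemma transpose_add: "transpose (A + B) = transpose A + transpose B"
  by (simp add: transpose_def vec_eq_iff)

lemma pos_semidef_add:
  fixes G H :: "real^'n^'n"
  assumes "pos_semidef G" "pos_semidef H"
  shows "pos_semidef (G + H)"
proof -
  have "symmetric_mat (G + H)"
    using assms unfolding pos_semidef_def symmetric_mat_def by (simp add: transpose_add)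
  with assms show ?thesis
    by (simp add: pos_semidef_def matrix_vector_mult_add_rdistrib inner_add_right)
qed

lemma add_scaleR_mat1_mult_vector: "(G + s *\<^sub>R mat 1) *v x = G *v x + s *\<^sub>R (x::real^'n)"
  by (simp add: matrix_vector_mult_add_rdistrib scaleR_matrix_vector_assoc[symmetric])

lemma inner_add_scaleR_mat1_mult_vector:
  "x \<bullet> ((G + s *\<^sub>R mat 1) *v x) = x \<bullet> (G *v x) + s * (x \<bullet> (x::real^'n))"
  by (simp add: add_scaleR_mat1_mult_vector inner_add_right)

lemma pos_def_add_scaleR_mat1:
  fixes G :: "real^'n^'n"
  assumes "pos_semidef G" "0 < s"
  shows "pos_def (G + s *\<^sub>R mat 1)"
proof -
  have "symmetric_mat (G + s *\<^sub>R mat 1)"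
    using assms(1) unfolding pos_semidef_def symmetric_mat_def
    by (simp add: transpose_add transpose_scalar)
  moreover have "0 < x \<bullet> ((G + s *\<^sub>R mat 1) *v x)" if "x \<noteq> 0" for x
    using assms that unfolding inner_add_scaleR_mat1_mult_vector pos_semidef_def
    by (simp add: add_nonneg_pos)
  ultimately show ?thesis unfolding pos_def_def by blast
qed

lemma pos_semidef_gram: "pos_semidef (J ** transpose J)"
proof -
  have "x \<bullet> ((J ** transpose J) *v x) = (transpose J *v x) \<bullet> (transpose J *v x)" for x
    by (simp add: matrix_vector_mul_assoc[symmetric] dot_lmul_matrix)
  then show ?thesis
    unfolding pos_semidef_def symmetric_mat_def by (simp add: matrix_transpose_mul)
qed

lemma pos_def_invertible:
  assumes "pos_def (M::real^'n^'n)"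
  shows "invertible M"
proof -
  have "x = 0" if "M *v x = 0" for x
    using assms that unfolding pos_def_def by force
  then show ?thesis unfolding invertible_left_inverse matrix_left_invertible_ker by blast
qed

lemma invertible_matrix_inv_mult_vector:
  assumes "invertible (M::real^'n^'n)"
  shows "M *v (matrix_inv M *v x) = x" "matrix_inv M *v (M *v x) = x"
proof -
  have "M ** matrix_inv M = mat 1 \<and> matrix_inv M ** M = mat 1"
    using assms unfolding invertible_def matrix_inv_def by (rule someI_ex)
  then show "M *v (matrix_inv M *v x) = x" "matrix_inv M *v (M *v x) = x"
    by (simp_all add: matrix_vector_mul_assoc)
qed

lemma pos_def_matrix_inv:
  assumes M: "pos_def (M::real^'n^'n)"
  shows "pos_def (matrix_inv M)"
proof -
  let ?N = "matrix_inv M"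
  have inv: "M *v (?N *v x) = x" for x
    using invertible_matrix_inv_mult_vector(1)[OF pos_def_invertible[OF M]] .
  have sym: "symmetric_mat M" using M unfolding pos_def_def by simp
  have "x \<bullet> (?N *v y) = (?N *v x) \<bullet> y" for x y
    using symmetric_mat_inner[OF sym, of "?N *v x" "?N *v y"] by (simp add: inv)
  moreover have "0 < x \<bullet> (?N *v x)" if "x \<noteq> 0" for x
  proof -
    have "?N *v x \<noteq> 0" using that inv[of x] by auto
    with M have "0 < (?N *v x) \<bullet> (M *v (?N *v x))" unfolding pos_def_def by blast
    then show ?thesis by (simp add: inv inner_commute)
  qed
  ultimately show ?thesis unfolding pos_def_def by (blast intro: symmetric_matI)
qed

section \<open>Square roots\<close>

text \<open>With \<open>y = Q b - sqrt \<mu> b\<close> one gets \<open>Q y = - sqrt \<mu> y\<close>. For \<open>\<mu> > 0\<close> semidefiniteness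
  forces \<open>y = 0\<close>; for \<open>\<mu> = 0\<close> it gives \<open>y \<bullet> y = b \<bullet> Q y = 0\<close>.\<close>
lemma pos_semidef_sqrt_eigenvector:
  fixes Q :: "real^'n^'n"
  assumes Q: "pos_semidef Q" and b: "(Q ** Q) *v b = \<mu> *\<^sub>R b" and \<mu>: "0 \<le> \<mu>"
  shows "Q *v b = sqrt \<mu> *\<^sub>R b"
proof -
  define s where "s = sqrt \<mu>"
  define y where "y = Q *v b - s *\<^sub>R b"
  have symQ: "symmetric_mat Q" using Q unfolding pos_semidef_def by simp
  have "s * s = \<mu>" using \<mu> by (simp add: s_def)
  then have Qy: "Q *v y = - s *\<^sub>R y"
    using b by (simp add: y_def matrix_vector_mul_assoc algebra_simps)
  have "y = 0"
  proof (cases "s = 0")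
    case True
    then have "y \<bullet> y = b \<bullet> (Q *v y)"
      using symmetric_mat_inner[OF symQ, of b y] by (simp add: y_def inner_commute)
    with True Qy show ?thesis by simp
  next
    case False
    then have "0 < s" using \<mu> by (simp add: s_def)
    have "0 \<le> y \<bullet> (Q *v y)" using Q unfolding pos_semidef_def by simp
    with Qy have "s * (y \<bullet> y) \<le> 0" by simp
    with \<open>0 < s\<close> have "y \<bullet> y \<le> 0" by (simp add: mult_le_0_iff)
    then show ?thesis by (metis inner_eq_zero_iff inner_ge_zero order_antisym)
  qed
  then show ?thesis by (simp add: y_def s_def)
qed

lemma pos_semidef_sqrt_exists:
  fixes P :: "real^'n^'n"
  assumes P: "pos_semidef P"
  obtains R where "pos_semidef R" "R ** R = P"
proof -
  have symP: "symmetric_mat P" using P unfolding pos_semidef_def by simp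
  obtain B where B: "orthonormal_eigenbasis P B"
    using symmetric_mat_orthonormal_eigenbasis[OF symP] .
  define \<mu> where "\<mu> b = b \<bullet> (P *v b)" for b
  have \<mu>: "0 \<le> \<mu> b" for b using P unfolding pos_semidef_def \<mu>_def by simp
  define f where "f x = (\<Sum>b\<in>B. (sqrt (\<mu> b) * (x \<bullet> b)) *\<^sub>R b)" for x
  have "linear f"
    by (rule linearI)
      (simp_all add: f_def algebra_simps sum.distrib scaleR_sum_right)
  define R where "R = matrix f"
  have coeff: "(R *v x) \<bullet> c = sqrt (\<mu> c) * (x \<bullet> c)" if "c \<in> B" for x c
    using \<open>linear f\<close> orthonormal_eigenbasis_inner_sum[OF B that]
    by (simp add: R_def matrix_works f_def)
  have "symmetric_mat R"
  proof (rule symmetric_matI)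
    fix x y
    show "x \<bullet> (R *v y) = (R *v x) \<bullet> y"
      unfolding orthonormal_eigenbasis_inner[OF B, of x "R *v y"]
        orthonormal_eigenbasis_inner[OF B, of "R *v x" y]
      by (rule sum.cong) (simp_all add: coeff)
  qed
  moreover have "0 \<le> x \<bullet> (R *v x)" for x
    unfolding orthonormal_eigenbasis_inner[OF B, of x "R *v x"]
    by (intro sum_nonneg) (simp add: coeff \<mu> mult.left_commute[of "x \<bullet> _"])
  moreover have "R ** R = P"
  proof -
    have "(R ** R) *v x = P *v x" for x
    proof (rule orthonormal_eigenbasis_eqI[OF B])
      fix b assume b: "b \<in> B"
      have "((R ** R) *v x) \<bullet> b = sqrt (\<mu> b) * sqrt (\<mu> b) * (x \<bullet> b)"
        using coeff[OF b] by (simp add: matrix_vector_mul_assoc[symmetric])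
      also have "\<dots> = (P *v x) \<bullet> b"
        using \<mu>[of b] orthonormal_eigenbasis_coeff[OF symP B b] by (simp add: \<mu>_def)
      finally show "((R ** R) *v x) \<bullet> b = (P *v x) \<bullet> b" .
    qed
    then show ?thesis by (metis matrix_eq)
  qed
  ultimately show ?thesis using that unfolding pos_semidef_def by blast
qed

lemma pos_semidef_sqrt_unique:
  fixes P Q R :: "real^'n^'n"
  assumes P: "pos_semidef P" and Q: "pos_semidef Q" "Q ** Q = P" and R: "pos_semidef R" "R ** R = P"
  shows "Q = R"
proof -
  have symP: "symmetric_mat P" using P unfolding pos_semidef_def by simp
  obtain B where B: "orthonormal_eigenbasis P B"
    using symmetric_mat_orthonormal_eigenbasis[OF symP] .
  have "Q *v b = R *v b" if "b \<in> B" for b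
  proof -
    have "P *v b = (b \<bullet> (P *v b)) *\<^sub>R b" "0 \<le> b \<bullet> (P *v b)"
      using orthonormal_eigenbasis_eigenvector[OF B that] P by (auto simp: pos_semidef_def)
    then show ?thesis
      using pos_semidef_sqrt_eigenvector[OF Q(1)] pos_semidef_sqrt_eigenvector[OF R(1)] Q(2) R(2)
      by metis
  qed
  then have "Q *v x = R *v x" for x
    using linear_eq_on_span[OF matrix_vector_mul_linear matrix_vector_mul_linear, of B Q R x] B
    unfolding orthonormal_eigenbasis_def by blast
  then show ?thesis by (metis matrix_eq)
qed

lemma mat_sqrt:
  assumes "pos_semidef P"
  shows "pos_semidef (mat_sqrt P)" "mat_sqrt P ** mat_sqrt P = P"
proof -
  have "\<exists>!R. pos_semidef R \<and> R ** R = P"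
    using pos_semidef_sqrt_exists[OF assms] pos_semidef_sqrt_unique[OF assms] by metis
  from theI'[OF this] show "pos_semidef (mat_sqrt P)" "mat_sqrt P ** mat_sqrt P = P"
    unfolding mat_sqrt_def by auto
qed

section \<open>Relatively small perturbations\<close>

lemma quadratic_form_le_relative_spec_norm:
  assumes K: "pos_def K"
  shows "x \<bullet> (S *v x)
    \<le> spec_norm (mat_sqrt (matrix_inv K) ** S ** mat_sqrt (matrix_inv K)) * (x \<bullet> (K *v x))"
proof -
  define R where "R = mat_sqrt (matrix_inv K)"
  define M where "M = R ** S ** R"
  have R: "pos_semidef R" "R ** R = matrix_inv K"
    using mat_sqrt[OF pos_def_imp_pos_semidef[OF pos_def_matrix_inv[OF K]]] by (simp_all add: R_def)
  have symR: "symmetric_mat R" using R(1) unfolding pos_semidef_def by simp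
  define y where "y = R *v (K *v x)"
  have "R *v y = (R ** R) *v (K *v x)" by (simp add: y_def matrix_vector_mul_assoc matrix_mul_assoc)
  then have Ry: "R *v y = x"
    using invertible_matrix_inv_mult_vector(2)[OF pos_def_invertible[OF K]] by (simp add: R(2))
  have "x \<bullet> (S *v x) = (R *v y) \<bullet> (S *v (R *v y))" by (simp add: Ry)
  also have "\<dots> = y \<bullet> (R *v (S *v (R *v y)))" by (rule symmetric_mat_inner[OF symR, symmetric])
  also have "\<dots> = y \<bullet> (M *v y)" by (simp add: M_def matrix_vector_mul_assoc matrix_mul_assoc)
  also have "\<dots> \<le> norm y * norm (M *v y)" by (rule norm_cauchy_schwarz)
  also have "\<dots> \<le> norm y * (spec_norm M * norm y)"
    unfolding spec_norm_def by (intro mult_left_mono onorm) simp_all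
  also have "\<dots> = spec_norm M * (y \<bullet> y)" by (simp add: power2_eq_square power2_norm_eq_inner[symmetric])
  also have "y \<bullet> y = x \<bullet> (K *v x)"
    using symmetric_mat_inner[OF symR, of "K *v x" y, folded y_def] by (simp add: Ry inner_commute)
  finally show ?thesis by (simp add: M_def R_def)
qed

lemma extreme_eigenvalues_add_pos_semidef:
  fixes K S :: "real^'n^'n"
  defines "\<eta> \<equiv> spec_norm (mat_sqrt (matrix_inv K) ** S ** mat_sqrt (matrix_inv K))"
  assumes Kpd: "pos_def K" and S: "pos_semidef S" and \<sigma>: "0 < \<sigma>"
  shows "lambda_max (K + \<sigma> *\<^sub>R mat 1) \<le> lambda_max (K + S + \<sigma> *\<^sub>R mat 1)"
    and "lambda_min (K + \<sigma> *\<^sub>R mat 1) \<le> lambda_min (K + S + \<sigma> *\<^sub>R mat 1)"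
    and "lambda_max (K + S + \<sigma> *\<^sub>R mat 1) \<le> (1 + \<eta>) * lambda_max (K + \<sigma> *\<^sub>R mat 1)"
proof -
  let ?A = "K + \<sigma> *\<^sub>R mat 1" and ?B = "K + S + \<sigma> *\<^sub>R mat 1"
  have K: "pos_semidef K" using Kpd by (rule pos_def_imp_pos_semidef)
  have A: "symmetric_mat ?A" and B: "symmetric_mat ?B"
    using pos_def_add_scaleR_mat1[OF K \<sigma>] pos_def_add_scaleR_mat1[OF pos_semidef_add[OF K S] \<sigma>]
    by (simp_all add: pos_def_def)
  have "0 \<le> \<eta>" unfolding \<eta>_def spec_norm_def by (rule onorm_pos_le) simp
  have qA: "x \<bullet> (?A *v x) = x \<bullet> (K *v x) + \<sigma> * (x \<bullet> x)"
    and qB: "x \<bullet> (?B *v x) = x \<bullet> (K *v x) + x \<bullet> (S *v x) + \<sigma> * (x \<bullet> x)" for x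
    unfolding inner_add_scaleR_mat1_mult_vector
    by (simp_all add: matrix_vector_mult_add_rdistrib inner_add_right)
  have A_le_B: "x \<bullet> (?A *v x) \<le> x \<bullet> (?B *v x)" for x
    using S unfolding qA qB pos_semidef_def by simp
  have B_le_A: "x \<bullet> (?B *v x) \<le> (1 + \<eta>) * (x \<bullet> (?A *v x))" for x
    using quadratic_form_le_relative_spec_norm[OF Kpd, of x S, folded \<eta>_def]
      mult_nonneg_nonneg[OF \<open>0 \<le> \<eta>\<close>, of "\<sigma> * (x \<bullet> x)"] \<sigma>
    unfolding qA qB by (simp add: algebra_simps)
  show "lambda_max ?A \<le> lambda_max ?B"
    using A_le_B rayleigh_quotient_bounds(2)[OF B] by (intro lambda_max_leI[OF A]) (rule order_trans)
  show "lambda_min ?A \<le> lambda_min ?B"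
    using A_le_B rayleigh_quotient_bounds(1)[OF A] by (intro lambda_min_geI[OF B]) (rule order_trans)
  show "lambda_max ?B \<le> (1 + \<eta>) * lambda_max ?A"
  proof (rule lambda_max_leI[OF B])
    fix x
    have "(1 + \<eta>) * (x \<bullet> (?A *v x)) \<le> (1 + \<eta>) * (lambda_max ?A * (x \<bullet> x))"
      using rayleigh_quotient_bounds(2)[OF A] \<open>0 \<le> \<eta>\<close> by (intro mult_left_mono) simp_all
    with B_le_A[of x] show "x \<bullet> (?B *v x) \<le> (1 + \<eta>) * lambda_max ?A * (x \<bullet> x)"
      by (simp add: mult.assoc)
  qed
qed

section \<open>Residuals of kernel ridge regression\<close>

lemma krr_residual_eq:
  assumes G: "pos_semidef G" and s: "0 < s"
  shows "krr_residual G s Y = s\<^sup>2 * (norm (matrix_inv (G + s *\<^sub>R mat 1) *v Y))\<^sup>2"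
proof -
  define z where "z = matrix_inv (G + s *\<^sub>R mat 1) *v Y"
  have "(G + s *\<^sub>R mat 1) *v z = Y"
    unfolding z_def
    by (rule invertible_matrix_inv_mult_vector(1)[OF pos_def_invertible[OF pos_def_add_scaleR_mat1[OF G s]]])
  then have "G *v z + s *\<^sub>R z = Y" by (simp add: add_scaleR_mat1_mult_vector)
  then have "Y - G *v z = s *\<^sub>R z" by (metis add_diff_cancel_left')
  then have "Y - (G ** matrix_inv (G + s *\<^sub>R mat 1)) *v Y = s *\<^sub>R z"
    by (simp add: z_def matrix_vector_mul_assoc[symmetric])
  then show ?thesis
    unfolding krr_residual_def z_def using s by (simp add: power_mult_distrib)
qed

lemma norm_matrix_inv_mult_vector_bounds:
  assumes A: "pos_def A"
  shows "norm y / lambda_max A \<le> norm (matrix_inv A *v y)"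
    and "norm (matrix_inv A *v y) \<le> norm y / lambda_min A"
proof -
  have Az: "A *v (matrix_inv A *v y) = y"
    by (rule invertible_matrix_inv_mult_vector(1)[OF pos_def_invertible[OF A]])
  have sym: "symmetric_mat A" using A unfolding pos_def_def by simp
  have min: "0 < lambda_min A" by (rule lambda_min_pos[OF A])
  with lambda_min_le_lambda_max[OF sym] have "0 < lambda_max A" by linarith
  with norm_mult_le_lambda_max[OF pos_def_imp_pos_semidef[OF A], of "matrix_inv A *v y"]
  show "norm y / lambda_max A \<le> norm (matrix_inv A *v y)"
    by (simp add: Az divide_le_eq mult.commute)
  from min lambda_min_mult_norm_le[OF sym, of "matrix_inv A *v y"]
  show "norm (matrix_inv A *v y) \<le> norm y / lambda_min A"
    by (simp add: Az le_divide_eq mult.commute)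
qed

lemma sqrt_krr_residual_ratio_bounds:
  assumes G: "pos_semidef G" and H: "pos_semidef H" and s: "0 < s" and Y: "Y \<noteq> 0"
  shows "lambda_min (G + s *\<^sub>R mat 1) / lambda_max (H + s *\<^sub>R mat 1)
           \<le> sqrt (krr_residual H s Y / krr_residual G s Y)"
    and "sqrt (krr_residual H s Y / krr_residual G s Y)
           \<le> lambda_max (G + s *\<^sub>R mat 1) / lambda_min (H + s *\<^sub>R mat 1)"
proof -
  let ?A = "G + s *\<^sub>R mat 1" and ?B = "H + s *\<^sub>R mat 1"
  have A: "pos_def ?A" and B: "pos_def ?B"
    using G H s by (simp_all add: pos_def_add_scaleR_mat1)
  define zG where "zG = norm (matrix_inv ?A *v Y)"
  define zH where "zH = norm (matrix_inv ?B *v Y)"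
  note boundsG = norm_matrix_inv_mult_vector_bounds[OF A, of Y, folded zG_def]
  note boundsH = norm_matrix_inv_mult_vector_bounds[OF B, of Y, folded zH_def]
  have Y': "0 < norm Y" using Y by simp
  have "0 \<le> zH" by (simp add: zH_def)
  have minA: "0 < lambda_min ?A" and minB: "0 < lambda_min ?B"
    using A B by (simp_all add: lambda_min_pos)
  have maxB: "0 < lambda_max ?B"
    using minB lambda_min_le_lambda_max[of ?B] B unfolding pos_def_def by fastforce
  have YA: "0 < norm Y / lambda_max ?A"
    using A Y' minA lambda_min_le_lambda_max[of ?A] unfolding pos_def_def by fastforce
  with boundsG(1) have zG: "0 < zG" by linarith
  have ratio: "sqrt (krr_residual H s Y / krr_residual G s Y) = zH / zG"
    using s zG by (simp add: krr_residual_eq[OF G s] krr_residual_eq[OF H s] zG_def zH_def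
        power_divide[symmetric] real_sqrt_divide)
  have "lambda_min ?A / lambda_max ?B = (norm Y / lambda_max ?B) / (norm Y / lambda_min ?A)"
    using Y' minA by (simp add: field_simps)
  also have "\<dots> \<le> zH / zG"
    using boundsG boundsH Y' maxB zG \<open>0 \<le> zH\<close> by (intro frac_le) simp_all
  finally show "lambda_min ?A / lambda_max ?B \<le> sqrt (krr_residual H s Y / krr_residual G s Y)"
    by (simp add: ratio)
  have "zH / zG \<le> (norm Y / lambda_min ?B) / (norm Y / lambda_max ?A)"
    using boundsG boundsH Y' minB YA \<open>0 \<le> zH\<close> by (intro frac_le) simp_all
  also have "\<dots> = lambda_max ?A / lambda_min ?B"
    using Y' minB by (simp add: field_simps)
  finally show "sqrt (krr_residual H s Y / krr_residual G s Y) \<le> lambda_max ?A / lambda_min ?B"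
    by (simp add: ratio)
qed

text \<open>The scalar core of the theorem, for the extreme eigenvalues \<open>\<beta> \<le> \<alpha>\<close> of \<open>K + \<sigma> I\<close> and
  \<open>\<gamma> \<le> \<Gamma>\<close> of \<open>K + S + \<sigma> I\<close>. The lower bound rests on \<open>(1 + \<eta>) (1 - \<eta>) \<le> 1\<close>.\<close>
lemma perturbed_condition_number_bounds:
  fixes \<alpha> \<beta> \<Gamma> \<gamma> \<eta> c :: real
  assumes \<beta>: "0 < \<beta>" "\<beta> \<le> \<alpha>" "\<beta> \<le> \<gamma>" and \<Gamma>: "\<alpha> \<le> \<Gamma>" "\<Gamma> \<le> (1 + \<eta>) * \<alpha>"
    and \<eta>: "0 \<le> \<eta>" "\<eta> < 1" and c: "\<alpha> / \<beta> \<le> c"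
  shows "\<Gamma> / (c / (1 - \<eta>)\<^sup>2 * \<alpha>) \<le> \<beta> / \<Gamma>"
    and "\<alpha> / \<gamma> \<le> c / (1 - \<eta>)\<^sup>2 * \<Gamma> / \<alpha>"
proof -
  define a where "a = c / (1 - \<eta>)\<^sup>2"
  have \<alpha>: "0 < \<alpha>" using \<beta> by linarith
  have "1 \<le> \<alpha> / \<beta>" using \<beta> by simp
  with c have "1 \<le> c" by linarith
  have e: "0 < (1 - \<eta>)\<^sup>2" "(1 - \<eta>)\<^sup>2 \<le> 1" using \<eta> by (simp_all add: power_le_one)
  with \<open>1 \<le> c\<close> have "c \<le> a" by (simp add: a_def le_divide_eq mult_left_le)
  have "\<Gamma>\<^sup>2 \<le> ((1 + \<eta>) * \<alpha>)\<^sup>2" using \<Gamma> \<alpha> by (intro power_mono) simp_all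
  also have "\<dots> \<le> \<alpha>\<^sup>2 / (1 - \<eta>)\<^sup>2"
  proof -
    have "(1 + \<eta>) * (1 - \<eta>) = 1 - \<eta> * \<eta>" by (simp add: algebra_simps)
    moreover have "\<eta> * \<eta> \<le> 1" using \<eta> by (intro mult_le_one) simp_all
    ultimately have "((1 + \<eta>) * (1 - \<eta>))\<^sup>2 \<le> 1"
      using \<eta> by (intro power_le_one) simp_all
    then have "((1 + \<eta>) * (1 - \<eta>))\<^sup>2 * \<alpha>\<^sup>2 \<le> \<alpha>\<^sup>2"
      by (simp add: mult_left_le_one_le)
    then show ?thesis using e(1) by (simp add: le_divide_eq power_mult_distrib ac_simps)
  qed
  also have "\<dots> = (\<alpha> / \<beta>) * (\<alpha> * \<beta>) / (1 - \<eta>)\<^sup>2" using \<beta> by (simp add: power2_eq_square)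
  also have "\<dots> \<le> c * (\<alpha> * \<beta>) / (1 - \<eta>)\<^sup>2"
    using c \<alpha> \<beta> e(1) by (intro divide_right_mono mult_right_mono) simp_all
  also have "\<dots> = a * (\<alpha> * \<beta>)" by (simp add: a_def)
  finally have "\<Gamma> * \<Gamma> \<le> a * \<alpha> * \<beta>" by (simp add: power2_eq_square mult.assoc)
  then show "\<Gamma> / (c / (1 - \<eta>)\<^sup>2 * \<alpha>) \<le> \<beta> / \<Gamma>"
    using \<alpha> \<Gamma> \<open>1 \<le> c\<close> \<open>c \<le> a\<close> unfolding a_def[symmetric]
    by (simp add: divide_le_eq le_divide_eq mult.commute mult.left_commute)
  have "\<alpha> / \<gamma> \<le> \<alpha> / \<beta>" using \<alpha> \<beta> by (simp add: frac_le)
  also have "\<dots> \<le> a" using c \<open>c \<le> a\<close> by linarith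
  also have "\<dots> \<le> a * \<Gamma> / \<alpha>" using \<alpha> \<Gamma> \<open>1 \<le> c\<close> \<open>c \<le> a\<close> by (simp add: le_divide_eq)
  finally show "\<alpha> / \<gamma> \<le> c / (1 - \<eta>)\<^sup>2 * \<Gamma> / \<alpha>" by (simp add: a_def)
qed

theorem theorem7:
  fixes J :: "real^'p^'n" and J' :: "real^'q^'n" and Y :: "real^'n"
    and \<sigma> \<eta> c a :: real and K S :: "real^'n^'n"
  assumes K_def: "K = J ** transpose J"
    and S_def: "S = J' ** transpose J'"
    and Kpd: "pos_def K"
    and sigma_pos: "\<sigma> > 0"
    and Y_nz: "Y \<noteq> 0"
    and eta_def: "\<eta> = spec_norm (mat_sqrt (matrix_inv K) ** S ** mat_sqrt (matrix_inv K))"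
    and eta_lt: "\<eta> < 1"
    and cond_le: "cond_num (K + \<sigma> *\<^sub>R mat 1) \<le> c"
    and a_def: "a = c / (1 - \<eta>)\<^sup>2"
  shows "lambda_max (K + S + \<sigma> *\<^sub>R mat 1) / (a * lambda_max (K + \<sigma> *\<^sub>R mat 1))
           \<le> sqrt (krr_residual (K + S) \<sigma> Y / krr_residual K \<sigma> Y)
       \<and> sqrt (krr_residual (K + S) \<sigma> Y / krr_residual K \<sigma> Y)
           \<le> a * lambda_max (K + S + \<sigma> *\<^sub>R mat 1) / lambda_max (K + \<sigma> *\<^sub>R mat 1)"
proof -
  have K: "pos_semidef K" using Kpd by (rule pos_def_imp_pos_semidef)
  have S: "pos_semidef S" unfolding S_def by (rule pos_semidef_gram)
  have A: "pos_def (K + \<sigma> *\<^sub>R mat 1)" using K sigma_pos by (rule pos_def_add_scaleR_mat1)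
  have "0 \<le> \<eta>" unfolding eta_def spec_norm_def by (rule onorm_pos_le) simp
  note eigenvalues = extreme_eigenvalues_add_pos_semidef[OF Kpd S sigma_pos, folded eta_def]
  note residuals = sqrt_krr_residual_ratio_bounds[OF K pos_semidef_add[OF K S] sigma_pos Y_nz]
  have "0 < lambda_min (K + \<sigma> *\<^sub>R mat 1)"
    and "lambda_min (K + \<sigma> *\<^sub>R mat 1) \<le> lambda_max (K + \<sigma> *\<^sub>R mat 1)"
    using A by (simp_all add: lambda_min_pos lambda_min_le_lambda_max pos_def_def)
  with eigenvalues residuals show ?thesis
    using perturbed_condition_number_bounds[OF _ _ _ _ _ \<open>0 \<le> \<eta>\<close> eta_lt cond_le[unfolded cond_num_def]]
    unfolding a_def by (meson order_trans)
qed

end
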